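(* Assume that $X^\infty\cap\mathcal{K}(f)=\{0\}$. Then: (a) Problem (P) has a finite optimal value $f_*:=\inf_{x\in X}f(x)$, and $\mathrm{Sol}(P)$ is nonempty and compact. (b) Problem (P) has weak sharp minima at infinity: there exist constants $c>0$ and $R>0$ such that $$f(x)-f_*\ \ge\ c\,\mathrm{dist}(x,\mathrm{Sol}(P))\quad\text{for all } x\in X\setminus\mathbb{B}_R.$$ (c) $f$ is coercive on $X$, i.e. $f(x)\to+\infty$ whenever $x\in X$ and $\|x\|\to\infty$.
   Context: Standing assumptions: $f:\mathbb{R}^n\to\mathbb{R}\cup\{\pm\infty\}$ is proper (never $-\infty$ and finite at some point) and lower semicontinuous, with $\operatorname{dom}f=\{x:f(x)<+\infty\}$; $X\subset\mathbb{R}^n$ is a nonempty closed set with $\operatorname{dom}f\cap X$ unbounded. Problem (P) is $\inf_{x\in X}f(x)$ and $\mathrm{Sol}(P)=\{x\in X: f(x)\le f(y)\ \forall y\in X\}$. $\mathbb{B}_R$ is the open Euclidean ball of radius $R$ centered at $0$; $\mathrm{dist}(x,S)=\inf_{s\in S}\|x-s\|$. The asymptotic cone of $X$ is $X^\infty=\{u\in\mathbb{R}^n:\exists t_k\to+\infty,\ \exists x_k\in X,\ x_k/t_k\to u\}$. The asymptotic function of $f$ is $f^\infty(d)=\inf\{\liminf_{k\to\infty} f(t_kd_k)/t_k:\ t_k\to+\infty,\ d_k\to d\}$ (equivalently, $\operatorname{epi}f^\infty=(\operatorname{epi}f)^\infty$). $\mathcal{K}(f)=\{d\in\mathbb{R}^n: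 f^\infty(d)\le 0\}$. *)

theory Defs
  imports "HOL-Analysis.Analysis" "HOL-Library.Extended_Real"
begin

definition proper_fun :: "('a \<Rightarrow> ereal) \<Rightarrow> bool" where
  "proper_fun f \<longleftrightarrow> (\<forall>x. f x \<noteq> -\<infinity>) \<and> (\<exists>x. f x < \<infinity>)"

definition lsc_fun :: "('a::topological_space \<Rightarrow> ereal) \<Rightarrow> bool" where
  "lsc_fun f \<longleftrightarrow> (\<forall>x. f x \<le> Liminf (at x) f)"

definition fdom :: "('a \<Rightarrow> ereal) \<Rightarrow> 'a set" where
  "fdom f = {x. f x < \<infinity>}"

definition asym_cone :: "'a::real_normed_vector set \<Rightarrow> 'a set" where
  "asym_cone X = {u. \<exists>t::nat \<Rightarrow> real. \<exists>x::nat \<Rightarrow> 'a.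
      filterlim t at_top sequentially \<and> (\<forall>k. x k \<in> X) \<and>
      ((\<lambda>k. x k /\<^sub>R t k) \<longlonglongrightarrow> u)}"

definition asym_fun :: "('a::real_normed_vector \<Rightarrow> ereal) \<Rightarrow> 'a \<Rightarrow> ereal" where
  "asym_fun f d = Inf {liminf (\<lambda>k. f (t k *\<^sub>R dd k) / ereal (t k)) | t dd.
      filterlim t at_top sequentially \<and> (dd \<longlonglongrightarrow> d)}"

definition Kset :: "('a::real_normed_vector \<Rightarrow> ereal) \<Rightarrow> 'a set" where
  "Kset f = {d. asym_fun f d \<le> 0}"

definition SolP :: "('a \<Rightarrow> ereal) \<Rightarrow> 'a set \<Rightarrow> 'a set" where
  "SolP f X = {x \<in> X. \<forall>y\<in>X. f x \<le> f y}"

end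

theory Submission imports Defs begin

text \<open>If f grew sublinearly along an unbounded sequence in X, normalizing that sequence and
  extracting a convergent subsequence would produce a unit vector in the asymptotic cone of X
  on which the asymptotic function of f is nonpositive. Hence f x \<ge> c \<parallel>x\<parallel> on X far from
  the origin. This linear growth makes f coercive on X, so its sublevel sets in X are compact,
  the lower semicontinuous f attains its minimum there and the solution set is compact; and
  since the distance to a minimizer z is at most \<parallel>x\<parallel> + \<parallel>z\<parallel>, linear growth also yields weak
  sharp minima at infinity.\<close>

lemma lsc_fun_eventually_greater:
  assumes "lsc_fun f" "c < f x"
  shows "eventually (\<lambda>y. c < f y) (nhds x)"
proof -
  have "f x \<le> Liminf (at x) f" using assms(1) unfolding lsc_fun_def by blast
  then have "eventually (\<lambda>y. c < f y) (at x)" using assms(2) le_Liminf_iff by blast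
  then have "eventually (\<lambda>y. y \<noteq> x \<longrightarrow> c < f y) (nhds x)"
    unfolding eventually_at_filter by simp
  then show ?thesis by (rule eventually_mono) (use assms(2) in auto)
qed

lemma lsc_fun_closed_sublevel:
  assumes "lsc_fun f"
  shows "closed {x. f x \<le> c}"
proof -
  have "open {x. c < f x}"
  proof (rule open_subopen[THEN iffD2], intro ballI)
    fix x assume "x \<in> {x. c < f x}"
    then have "eventually (\<lambda>y. c < f y) (nhds x)"
      using lsc_fun_eventually_greater[OF assms] by simp
    then show "\<exists>T. open T \<and> x \<in> T \<and> T \<subseteq> {x. c < f x}"
      unfolding eventually_nhds by auto
  qed
  moreover have "- {x. c < f x} = {x. f x \<le> c}" by (auto simp: not_less)
  ultimately show ?thesis by (metis closed_Compl)
qed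

lemma lsc_fun_attains_min_on_compact:
  fixes f :: "'a::heine_borel \<Rightarrow> ereal"
  assumes "lsc_fun f" "compact K" "K \<noteq> {}"
  shows "\<exists>z\<in>K. \<forall>y\<in>K. f z \<le> f y"
proof -
  define \<F> where "\<F> = (\<lambda>y. K \<inter> {x. f x \<le> f y}) ` K"
  have "\<Inter> \<F> \<noteq> {}"
  proof (rule compact_chain)
    show "compact S" if "S \<in> \<F>" for S
      using that assms(1,2) lsc_fun_closed_sublevel by (auto simp: \<F>_def intro: compact_Int_closed)
    show "{} \<notin> \<F>" by (auto simp: \<F>_def)
    show "S \<subseteq> T \<or> T \<subseteq> S" if "S \<in> \<F> \<and> T \<in> \<F>" for S T
      using that by (auto simp: \<F>_def)
  qed
  then obtain z where "z \<in> \<Inter> \<F>" by blast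
  then show ?thesis using assms(3) unfolding \<F>_def by blast
qed

lemma asym_cone_Kset_unit_vector:
  fixes f :: "'a::euclidean_space \<Rightarrow> ereal"
  assumes xX: "\<And>k. x k \<in> X" and xpos: "\<And>k. 0 < norm (x k)"
    and xlim: "filterlim (\<lambda>k. norm (x k)) at_top sequentially"
    and fx: "\<And>k. f (x k) \<le> ereal (e k * norm (x k))" and e: "e \<longlonglongrightarrow> 0"
  shows "\<exists>d. norm d = 1 \<and> d \<in> asym_cone X \<inter> Kset f"
proof -
  define u where "u k = x k /\<^sub>R norm (x k)" for k
  have "u k \<in> sphere 0 1" for k using xpos[of k] by (simp add: u_def)
  then obtain d r where d: "d \<in> sphere 0 1" and r: "strict_mono r" and ur: "(u \<circ> r) \<longlonglongrightarrow> d"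
    using compact_sphere[THEN compact_imp_seq_compact] by (metis seq_compactE)
  define t where "t k = norm (x (r k))" for k
  have tlim: "filterlim t at_top sequentially"
    unfolding t_def using filterlim_compose[OF xlim filterlim_subseq[OF r]] by (simp add: o_def)
  have xr: "x (r k) = t k *\<^sub>R (u \<circ> r) k" for k
    using xpos[of "r k"] by (simp add: u_def t_def)
  have "(\<lambda>k. x (r k) /\<^sub>R t k) = u \<circ> r" by (auto simp: u_def t_def)
  then have "d \<in> asym_cone X"
    unfolding asym_cone_def using tlim ur xX by (auto intro!: exI[of _ t] exI[of _ "x \<circ> r"])
  moreover have "asym_fun f d \<le> 0"
  proof -
    have "asym_fun f d \<le> liminf (\<lambda>k. f (t k *\<^sub>R (u \<circ> r) k) / ereal (t k))"
      unfolding asym_fun_def by (rule Inf_lower) (use tlim ur in blast)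
    also have "\<dots> \<le> liminf (\<lambda>k. ereal (e (r k)))"
    proof (intro Liminf_mono always_eventually allI)
      fix k
      have "t k > 0" using xpos by (simp add: t_def)
      then have "f (x (r k)) / ereal (t k) \<le> ereal (e (r k) * t k) / ereal (t k)"
        using fx[of "r k"] by (intro ereal_divide_right_mono) (simp_all add: t_def)
      also have "\<dots> = ereal (e (r k))" using \<open>t k > 0\<close> by simp
      finally show "f (t k *\<^sub>R (u \<circ> r) k) / ereal (t k) \<le> ereal (e (r k))"
        by (simp add: xr)
    qed
    also have "\<dots> = 0"
      using LIMSEQ_subseq_LIMSEQ[OF e r] by (simp add: o_def lim_imp_Liminf zero_ereal_def)
    finally show ?thesis .
  qed
  ultimately show ?thesis using d by (auto simp: Kset_def)
qed

lemma SolP_nonempty_compact: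
  fixes f :: "'a::heine_borel \<Rightarrow> ereal"
  assumes lsc: "lsc_fun f" and "closed X" "x0 \<in> X" and bdd: "bounded (X \<inter> {x. f x \<le> f x0})"
  shows "SolP f X \<noteq> {} \<and> compact (SolP f X)"
proof -
  define K where "K = X \<inter> {x. f x \<le> f x0}"
  have "compact K"
    unfolding K_def using bdd assms(2) lsc_fun_closed_sublevel[OF lsc]
    by (simp add: compact_eq_bounded_closed closed_Int)
  moreover have "x0 \<in> K" using assms(3) by (simp add: K_def)
  ultimately obtain z where "z \<in> K" and zmin: "\<forall>y\<in>K. f z \<le> f y"
    using lsc_fun_attains_min_on_compact[OF lsc] by blast
  have "f z \<le> f y" if "y \<in> X" for y
  proof (cases "f y \<le> f x0")
    case True
    then show ?thesis using that zmin by (simp add: K_def)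
  next
    case False
    then show ?thesis using zmin \<open>x0 \<in> K\<close> by (meson linear order_trans)
  qed
  then have "z \<in> SolP f X"
    using \<open>z \<in> K\<close> by (simp add: SolP_def K_def)
  moreover have "SolP f X = K \<inter> {x. f x \<le> f z}"
    using \<open>z \<in> K\<close> calculation by (auto simp: SolP_def K_def intro: order_trans)
  ultimately show ?thesis
    using \<open>compact K\<close> lsc_fun_closed_sublevel[OF lsc] by (auto intro: compact_Int_closed)
qed

lemma linear_growth_if_asym_cone_Kset_trivial:
  fixes f :: "'a::euclidean_space \<Rightarrow> ereal"
  assumes cone: "asym_cone X \<inter> Kset f = {0}"
  shows "\<exists>c>0. \<exists>R. \<forall>x\<in>X. R \<le> norm x \<longrightarrow> ereal (c * norm x) \<le> f x"
proof (rule ccontr)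
  assume no_growth: "\<not> ?thesis"
  have "\<exists>y\<in>X. real (Suc k) \<le> norm y \<and> f y < ereal (inverse (real (Suc k)) * norm y)" for k
  proof -
    have "\<not> (\<forall>x\<in>X. real (Suc k) \<le> norm x \<longrightarrow> ereal (inverse (real (Suc k)) * norm x) \<le> f x)"
      using no_growth by (metis inverse_positive_iff_positive of_nat_0_less_iff zero_less_Suc)
    then show ?thesis by (auto simp: not_le)
  qed
  then obtain x where xX: "\<And>k. x k \<in> X" and xge: "\<And>k. real (Suc k) \<le> norm (x k)"
    and fx: "\<And>k. f (x k) < ereal (inverse (real (Suc k)) * norm (x k))"
    by metis
  have "real k \<le> norm (x k)" for k
    using xge[of k] by simp
  then have xlim: "filterlim (\<lambda>k. norm (x k)) at_top sequentially"
    by (intro filterlim_at_top_mono[OF filterlim_real_sequentially] always_eventually allI)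
  have xpos: "0 < norm (x k)" for k using xge[of k] by linarith
  have "f (x k) \<le> ereal (inverse (real (Suc k)) * norm (x k))" for k using fx[of k] by simp
  then obtain d where "norm d = 1" "d \<in> asym_cone X \<inter> Kset f"
    using asym_cone_Kset_unit_vector[OF xX xpos xlim _ LIMSEQ_inverse_real_of_nat] by blast
  then show False using cone by auto
qed

lemma coercive_if_linear_growth:
  assumes "c > 0" and growth: "\<forall>x\<in>X. R \<le> norm x \<longrightarrow> ereal (c * norm x) \<le> f x"
  shows "\<forall>M. \<exists>r. \<forall>x\<in>X. r \<le> norm x \<longrightarrow> ereal M \<le> f x"
proof
  fix M
  have "ereal M \<le> f x" if "x \<in> X" "max R (M / c) \<le> norm x" for x
  proof -
    have "M \<le> c * norm x" using that(2) \<open>c > 0\<close> by (simp add: pos_divide_le_eq mult.commute)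
    then show ?thesis using growth that by (meson ereal_less_eq(3) max.bounded_iff order_trans)
  qed
  then show "\<exists>r. \<forall>x\<in>X. r \<le> norm x \<longrightarrow> ereal M \<le> f x" by blast
qed

lemma bounded_sublevel_if_coercive:
  assumes coercive: "\<forall>M. \<exists>r. \<forall>x\<in>X. r \<le> norm x \<longrightarrow> ereal M \<le> f x"
  shows "bounded (X \<inter> {x. f x \<le> ereal v})"
proof -
  obtain r where r: "\<forall>x\<in>X. r \<le> norm x \<longrightarrow> ereal (v + 1) \<le> f x" using coercive by blast
  have "norm x \<le> r" if "x \<in> X" "f x \<le> ereal v" for x
  proof (rule ccontr)
    assume "\<not> norm x \<le> r"
    then have "ereal (v + 1) \<le> ereal v" using r that by (meson linorder_not_le less_imp_le order_trans)
    then show False by simp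
  qed
  then show ?thesis by (intro boundedI) auto
qed

lemma INF_eq_if_mem_SolP:
  assumes "z \<in> SolP f X"
  shows "(INF x\<in>X. f x) = f z"
  using assms by (auto simp: SolP_def intro: antisym INF_lower INF_greatest)

lemma weak_sharp_minima_at_infinity_if_linear_growth:
  assumes "c > 0" and growth: "\<forall>x\<in>X. R \<le> norm x \<longrightarrow> ereal (c * norm x) \<le> f x"
    and "z \<in> S"
  shows "\<exists>c'>0. \<exists>R'>0. \<forall>x\<in>X - ball 0 R'. ereal (c' * infdist x S) \<le> f x - ereal \<mu>"
proof (intro exI conjI ballI)
  define R' where "R' = max (max R 1) (2 * \<bar>\<mu>\<bar> / c + norm z)"
  show "c / 2 > 0" "R' > 0" using \<open>c > 0\<close> by (auto simp: R'_def)
  fix x assume "x \<in> X - ball 0 R'"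
  then have "x \<in> X" and xR': "R' \<le> norm x" by auto
  have "c * (2 * \<bar>\<mu>\<bar> / c + norm z) \<le> c * norm x"
    using xR' \<open>c > 0\<close> by (intro mult_left_mono) (auto simp: R'_def)
  then have big: "2 * \<bar>\<mu>\<bar> + c * norm z \<le> c * norm x"
    using \<open>c > 0\<close> by (simp add: algebra_simps)
  have "c / 2 * infdist x S \<le> c / 2 * (norm x + norm z)"
    using infdist_le[OF \<open>z \<in> S\<close>, of x] norm_triangle_ineq4[of x z] \<open>c > 0\<close>
    by (intro mult_left_mono) (auto simp: dist_norm)
  also have "\<dots> \<le> c * norm x - \<mu>" using big abs_ge_self[of \<mu>] by (simp add: field_simps)
  finally have "ereal (c / 2 * infdist x S) \<le> ereal (c * norm x) - ereal \<mu>" by simp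
  also have "\<dots> \<le> f x - ereal \<mu>"
    using growth \<open>x \<in> X\<close> xR' by (intro ereal_minus_mono) (auto simp: R'_def)
  finally show "ereal (c / 2 * infdist x S) \<le> f x - ereal \<mu>" .
qed

theorem mainTheorem1:
  fixes f :: "'a::euclidean_space \<Rightarrow> ereal" and X :: "'a set"
  assumes "proper_fun f" and "lsc_fun f"
    and "closed X" and "X \<noteq> {}" and "\<not> bounded (fdom f \<inter> X)"
    and "asym_cone X \<inter> Kset f = {0}"
  shows "(\<exists>r::real. (INF x\<in>X. f x) = ereal r)
       \<and> SolP f X \<noteq> {} \<and> compact (SolP f X)
       \<and> (\<exists>c>0. \<exists>R>0. \<forall>x\<in>X - ball 0 R.
            ereal (c * infdist x (SolP f X)) \<le> f x - (INF y\<in>X. f y))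
       \<and> (\<forall>M::real. \<exists>r. \<forall>x\<in>X. r \<le> norm x \<longrightarrow> ereal M \<le> f x)"
proof -
  obtain c R where "c > 0" and growth: "\<forall>x\<in>X. R \<le> norm x \<longrightarrow> ereal (c * norm x) \<le> f x"
    using linear_growth_if_asym_cone_Kset_trivial[OF assms(6)] by blast
  note coercive = coercive_if_linear_growth[OF this]
  have "fdom f \<inter> X \<noteq> {}" using assms(5) by auto
  then obtain x0 where "x0 \<in> X" and "f x0 < \<infinity>" by (auto simp: fdom_def)
  moreover have "f x0 \<noteq> -\<infinity>" using assms(1) by (simp add: proper_fun_def)
  ultimately obtain v where fx0: "f x0 = ereal v" by (cases "f x0") auto
  have "SolP f X \<noteq> {} \<and> compact (SolP f X)"
    using SolP_nonempty_compact[OF assms(2,3) \<open>x0 \<in> X\<close>] bounded_sublevel_if_coercive[OF coercive]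
    by (simp add: fx0)
  then obtain z where z: "z \<in> SolP f X" by blast
  have "f z \<le> f x0" using z \<open>x0 \<in> X\<close> by (simp add: SolP_def)
  moreover have "f z \<noteq> -\<infinity>" using assms(1) by (simp add: proper_fun_def)
  ultimately obtain \<mu> where \<mu>: "f z = ereal \<mu>" using fx0 by (cases "f z") auto
  show ?thesis
    unfolding INF_eq_if_mem_SolP[OF z] \<mu>
    using weak_sharp_minima_at_infinity_if_linear_growth[OF \<open>c > 0\<close> growth z, of \<mu>]
      \<open>SolP f X \<noteq> {} \<and> compact (SolP f X)\<close> coercive by blast
qed

end
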